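(* Let $\lambda,\mu\in\mathbb{C}\setminus\{0,1\}$ and $a,b\in\mathbb{C}^n$ with $a\neq b$, let $G$ be the group generated by $f=(a,\lambda)$ and $g=(b,\mu)$, and let $L=\mathbb{C}(b-a)+a$. If $\overline{G(a)}=L$, then $\overline{G(z)}=L$ for every $z\in L$.
   Context: For $c\in\mathbb{C}^n$ and $\nu\in\mathbb{C}\setminus\{0,1\}$, $(c,\nu)$ denotes the map $z\mapsto\nu(z-c)+c$ of $\mathbb{C}^n$. $\mathbb{C}(b-a)+a=\{a+t(b-a):t\in\mathbb{C}\}$; $G(z)=\{h(z):h\in G\}$. *)

theory Defs
  imports "HOL-Analysis.Analysis"
begin

definition homothety :: "complex ^ 'n \<Rightarrow> complex \<Rightarrow> complex ^ 'n \<Rightarrow> complex ^ 'n" where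
  "homothety c \<nu> = (\<lambda>z. \<nu> *s (z - c) + c)"

inductive_set gen_group :: "('a \<Rightarrow> 'a) set \<Rightarrow> ('a \<Rightarrow> 'a) set" for S where
  gen_id: "id \<in> gen_group S"
| gen_left: "s \<in> S \<Longrightarrow> h \<in> gen_group S \<Longrightarrow> s \<circ> h \<in> gen_group S"
| gen_inv: "s \<in> S \<Longrightarrow> h \<in> gen_group S \<Longrightarrow> inv s \<circ> h \<in> gen_group S"

definition orbit :: "('a \<Rightarrow> 'a) set \<Rightarrow> 'a \<Rightarrow> 'a set" where
  "orbit G z = (\<lambda>h. h z) ` G"

definition cline :: "complex ^ 'n \<Rightarrow> complex ^ 'n \<Rightarrow> (complex ^ 'n) set" where
  "cline a b = {a + t *s (b - a) | t. True}"

end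

theory Submission
  imports Defs
begin

(* Parametrising L by t \<mapsto> a + t(b - a), the homotheties f = (a,lam) and g = (b,mu) act on
   the parameter as t \<mapsto> lam t and t \<mapsto> mu (t - 1) + 1, so every element of the group G
   they generate acts on L as an affine map t \<mapsto> alpha t + beta.  Three cases remain:
   (1) lam, mu real: then every beta is real, so G(a) stays at distance \<ge> |b - a| from
       a + i(b - a) and cannot be dense in L; the hypothesis excludes this case.
   (2) |lam| = |mu| = 1: G acts on L by isometries, and density of G(a) transfers to any
       z \<in> L: move z close to a by the inverse of an element moving a close to z.
   (3) otherwise some generator contracts and lam or mu is not real.  The translations of L
       in G form an additive group containing the commutator translation (1 - mu)(lam - 1),
       stable under multiplication by the multipliers of G; it therefore contains lattices
       Z s + Z rho s with rho non-real and s arbitrarily small, hence is dense in C. *)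

lemma gen_group_comp:
  "h1 \<in> gen_group S \<Longrightarrow> h2 \<in> gen_group S \<Longrightarrow> h1 \<circ> h2 \<in> gen_group S"
  by (induction h1 rule: gen_group.induct) (auto simp: comp_assoc intro: gen_group.intros)

lemma gen_group_generator: "s \<in> S \<Longrightarrow> s \<in> gen_group S"
  using gen_group.gen_left[OF _ gen_group.gen_id] by fastforce

lemma gen_group_inv_generator: "s \<in> S \<Longrightarrow> inv s \<in> gen_group S"
  using gen_group.gen_inv[OF _ gen_group.gen_id] by fastforce

lemma gen_group_bij_inv:
  assumes "\<And>s. s \<in> S \<Longrightarrow> bij s" and "h \<in> gen_group S"
  shows "bij h \<and> inv h \<in> gen_group S"
  using assms(2)
proof (induction h rule: gen_group.induct)
  case gen_id
  show ?case by (metis bij_id inv_id gen_group.gen_id)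
next
  case (gen_left s h)
  have "bij s" using gen_left.hyps(1) assms(1) by blast
  then have "bij (s \<circ> h)" and "inv (s \<circ> h) = inv h \<circ> inv s"
    using gen_left.IH by (simp_all add: bij_comp o_inv_distrib)
  moreover have "inv h \<circ> inv s \<in> gen_group S"
    using gen_left by (blast intro: gen_group_comp gen_group_inv_generator)
  ultimately show ?case by (simp only:)
next
  case (gen_inv s h)
  have "bij (inv s)" and "inv (inv s) = s"
    using gen_inv.hyps(1) assms(1) by (simp_all add: bij_imp_bij_inv inv_inv_eq)
  then have "bij (inv s \<circ> h)" and "inv (inv s \<circ> h) = inv h \<circ> s"
    using gen_inv.IH by (simp_all add: bij_comp o_inv_distrib)
  moreover have "inv h \<circ> s \<in> gen_group S"
    using gen_inv by (blast intro: gen_group_comp gen_group_generator)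
  ultimately show ?case by (simp only:)
qed

lemma orbit_iff: "y \<in> orbit G z \<longleftrightarrow> (\<exists>h\<in>G. y = h z)"
  by (auto simp: orbit_def)

lemma norm_smult_vec: "norm (c *s (x::complex^'n)) = cmod c * norm x"
  unfolding norm_vec_def by (simp add: norm_mult L2_set_right_distrib)

lemma homothety_inverse:
  assumes "\<nu> \<noteq> 0"
  shows "bij (homothety c \<nu>)" and "inv (homothety c \<nu>) = homothety c (inverse \<nu>)"
proof -
  have left: "homothety c (inverse \<nu>) (homothety c \<nu> z) = z"
   and right: "homothety c \<nu> (homothety c (inverse \<nu>) z) = z" for z
    using assms by (auto simp: homothety_def vec_eq_iff field_simps)
  show "bij (homothety c \<nu>)" by (rule o_bij[of "homothety c (inverse \<nu>)"]) (auto simp: left right)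
  show "inv (homothety c \<nu>) = homothety c (inverse \<nu>)" by (rule inv_equality) (auto simp: left right)
qed

definition line_point :: "complex ^ 'n \<Rightarrow> complex ^ 'n \<Rightarrow> complex \<Rightarrow> complex ^ 'n" where
  "line_point a b t = a + t *s (b - a)"

lemma cline_eq_range: "cline a b = range (line_point a b)"
  by (auto simp: cline_def line_point_def)

lemma line_point_0: "line_point a b 0 = a"
  by (simp add: line_point_def)

lemma dist_line_point: "dist (line_point a b u) (line_point a b v) = cmod (u - v) * norm (b - a)"
proof -
  have "line_point a b u - line_point a b v = (u - v) *s (b - a)"
    by (simp add: line_point_def vec_eq_iff algebra_simps)
  then show ?thesis by (simp only: dist_norm norm_smult_vec)
qed

lemma homothety_first_point: "homothety a \<nu> (line_point a b t) = line_point a b (\<nu> * t)"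
  by (simp add: homothety_def line_point_def vec_eq_iff algebra_simps)

lemma homothety_second_point:
  "homothety b \<nu> (line_point a b t) = line_point a b (\<nu> * t + (1 - \<nu>))"
  by (simp add: homothety_def line_point_def vec_eq_iff algebra_simps)

lemma lattice_approx:
  fixes s \<rho> w :: complex
  assumes "Im \<rho> \<noteq> 0" "s \<noteq> 0"
  shows "\<exists>m n::int. cmod (w - (of_int m * s + of_int n * (\<rho> * s))) \<le> cmod s * (1 + cmod \<rho>) / 2"
proof -
  define y where "y = Im (w / s) / Im \<rho>"
  define x where "x = Re (w / s) - y * Re \<rho>"
  have q: "w / s = of_real x + of_real y * \<rho>"
    using assms(1) by (simp add: complex_eq_iff x_def y_def)
  define m where "m = round x"
  define n where "n = round y"
  have "w - (of_int m * s + of_int n * (\<rho> * s))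
      = s * (of_real (x - of_int m) + of_real (y - of_int n) * \<rho>)"
    using assms(2) q by (simp add: field_simps)
  also have "cmod \<dots> \<le> cmod s * (\<bar>x - of_int m\<bar> + \<bar>y - of_int n\<bar> * cmod \<rho>)"
    unfolding norm_mult
    by (intro mult_left_mono order.trans[OF norm_triangle_ineq])
      (simp_all only: norm_mult norm_of_real order_refl norm_ge_zero)
  also have "\<dots> \<le> cmod s * (1/2 + 1/2 * cmod \<rho>)"
    using of_int_round_abs_le[of x] of_int_round_abs_le[of y]
    by (intro mult_left_mono add_mono mult_right_mono) (auto simp: m_def n_def abs_minus_commute)
  finally show ?thesis by (intro exI[of _ m] exI[of _ n]) (simp add: field_simps)
qed

subsection \<open>The action of the group on the line\<close>

context
  fixes a b :: "complex ^ 'n" and lam mu :: complex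
  assumes lam_nz: "lam \<noteq> 0" and mu_nz: "mu \<noteq> 0"
begin

abbreviation hgroup where "hgroup \<equiv> gen_group {homothety a lam, homothety b mu}"

abbreviation lpt where "lpt \<equiv> line_point a b"

lemma hgroup_bij_inv: "h \<in> hgroup \<Longrightarrow> bij h \<and> inv h \<in> hgroup"
  by (rule gen_group_bij_inv) (auto simp: homothety_inverse lam_nz mu_nz)

lemma hgroup_inverse_generators: "homothety a (inverse lam) \<in> hgroup" "homothety b (inverse mu) \<in> hgroup"
  using gen_group_inv_generator[of "homothety a lam"] gen_group_inv_generator[of "homothety b mu"]
  by (auto simp: homothety_inverse lam_nz mu_nz)

lemma hgroup_affine_invariant:
  assumes "(1, 0) \<in> C"
    and "\<And>\<alpha> \<beta> \<nu>. (\<alpha>, \<beta>) \<in> C \<Longrightarrow> \<nu> \<in> {lam, inverse lam} \<Longrightarrow> (\<nu> * \<alpha>, \<nu> * \<beta>) \<in> C"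
    and "\<And>\<alpha> \<beta> \<nu>. (\<alpha>, \<beta>) \<in> C \<Longrightarrow> \<nu> \<in> {mu, inverse mu} \<Longrightarrow> (\<nu> * \<alpha>, \<nu> * \<beta> + (1 - \<nu>)) \<in> C"
    and "h \<in> hgroup"
  shows "\<exists>\<alpha> \<beta>. (\<alpha>, \<beta>) \<in> C \<and> (\<forall>t. h (lpt t) = lpt (\<alpha> * t + \<beta>))"
  using assms(4)
proof (induction h rule: gen_group.induct)
  case gen_id
  show ?case using assms(1) by (intro exI[of _ 1] exI[of _ 0]) simp
next
  case (gen_left s h)
  then obtain \<alpha> \<beta> where ab: "(\<alpha>, \<beta>) \<in> C" "\<forall>t. h (lpt t) = lpt (\<alpha> * t + \<beta>)" by blast
  from gen_left(1) show ?case
  proof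
    assume "s = homothety a lam"
    then show ?case using ab assms(2)[OF ab(1), of lam]
      by (intro exI[of _ "lam * \<alpha>"] exI[of _ "lam * \<beta>"]) (simp add: homothety_first_point algebra_simps)
  next
    assume "s \<in> {homothety b mu}"
    then show ?case using ab assms(3)[OF ab(1), of mu]
      by (intro exI[of _ "mu * \<alpha>"] exI[of _ "mu * \<beta> + (1 - mu)"])
        (simp add: homothety_second_point algebra_simps)
  qed
next
  case (gen_inv s h)
  then obtain \<alpha> \<beta> where ab: "(\<alpha>, \<beta>) \<in> C" "\<forall>t. h (lpt t) = lpt (\<alpha> * t + \<beta>)" by blast
  from gen_inv(1) show ?case
  proof
    assume "s = homothety a lam"
    then show ?case using ab assms(2)[OF ab(1), of "inverse lam"]
      by (intro exI[of _ "inverse lam * \<alpha>"] exI[of _ "inverse lam * \<beta>"])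
        (simp add: homothety_inverse lam_nz homothety_first_point algebra_simps)
  next
    assume "s \<in> {homothety b mu}"
    then show ?case using ab assms(3)[OF ab(1), of "inverse mu"]
      by (intro exI[of _ "inverse mu * \<alpha>"] exI[of _ "inverse mu * \<beta> + (1 - inverse mu)"])
        (simp add: homothety_inverse mu_nz homothety_second_point algebra_simps)
  qed
qed

lemma hgroup_affine:
  assumes "h \<in> hgroup"
  shows "\<exists>\<alpha> \<beta>. \<alpha> \<noteq> 0 \<and> (\<forall>t. h (lpt t) = lpt (\<alpha> * t + \<beta>))"
proof -
  have "\<exists>\<alpha> \<beta>. (\<alpha>, \<beta>) \<in> {(\<alpha>, \<beta>). \<alpha> \<noteq> 0} \<and> (\<forall>t. h (lpt t) = lpt (\<alpha> * t + \<beta>))"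
    by (rule hgroup_affine_invariant) (use assms lam_nz mu_nz in auto)
  then show ?thesis by auto
qed

lemma hgroup_isometric:
  assumes "cmod lam = 1" "cmod mu = 1" "h \<in> hgroup"
  shows "\<exists>\<alpha> \<beta>. cmod \<alpha> = 1 \<and> (\<forall>t. h (lpt t) = lpt (\<alpha> * t + \<beta>))"
proof -
  have "\<exists>\<alpha> \<beta>. (\<alpha>, \<beta>) \<in> {(\<alpha>, \<beta>). cmod \<alpha> = 1} \<and> (\<forall>t. h (lpt t) = lpt (\<alpha> * t + \<beta>))"
    by (rule hgroup_affine_invariant) (use assms in \<open>auto simp: norm_mult norm_inverse\<close>)
  then show ?thesis by auto
qed

lemma hgroup_real:
  assumes "lam \<in> \<real>" "mu \<in> \<real>" "h \<in> hgroup"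
  shows "\<exists>\<alpha> \<beta>. \<beta> \<in> \<real> \<and> (\<forall>t. h (lpt t) = lpt (\<alpha> * t + \<beta>))"
proof -
  have "\<exists>\<alpha> \<beta>. (\<alpha>, \<beta>) \<in> {(\<alpha>, \<beta>). \<alpha> \<in> \<real> \<and> \<beta> \<in> \<real>}
      \<and> (\<forall>t. h (lpt t) = lpt (\<alpha> * t + \<beta>))"
    by (rule hgroup_affine_invariant)
      (use assms in \<open>auto intro!: Reals_mult Reals_add Reals_diff Reals_inverse\<close>)
  then show ?thesis by auto
qed

lemma hgroup_maps_line: "h \<in> hgroup \<Longrightarrow> z \<in> cline a b \<Longrightarrow> h z \<in> cline a b"
  using hgroup_affine by (fastforce simp: cline_eq_range)

lemma orbit_subset_line: "z \<in> cline a b \<Longrightarrow> orbit hgroup z \<subseteq> cline a b"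
  using hgroup_maps_line by (auto simp: orbit_iff)

lemma hgroup_inv_affine:
  assumes "h \<in> hgroup" "\<alpha> \<noteq> 0" "\<forall>t. h (lpt t) = lpt (\<alpha> * t + \<beta>)"
  shows "inv h (lpt t) = lpt ((t - \<beta>) / \<alpha>)"
proof -
  have "lpt t = h (lpt ((t - \<beta>) / \<alpha>))" using assms(2,3) by simp
  then show ?thesis using hgroup_bij_inv[OF assms(1)] by (simp add: bij_is_inj)
qed

subsection \<open>Translations in G\<close>

definition line_shifts :: "complex set" where
  "line_shifts = {s. \<exists>h\<in>hgroup. \<forall>t. h (lpt t) = lpt (t + s)}"

lemma line_shifts_0: "0 \<in> line_shifts"
  unfolding line_shifts_def by (auto intro!: bexI[of _ id] gen_group.gen_id)

lemma line_shifts_add: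
  assumes "s \<in> line_shifts" "s' \<in> line_shifts"
  shows "s + s' \<in> line_shifts"
proof -
  obtain h h' where "h \<in> hgroup" "\<forall>t. h (lpt t) = lpt (t + s)"
    and "h' \<in> hgroup" "\<forall>t. h' (lpt t) = lpt (t + s')"
    using assms unfolding line_shifts_def by blast
  then show ?thesis
    unfolding line_shifts_def
    by (intro CollectI bexI[of _ "h \<circ> h'"] gen_group_comp) (auto simp: algebra_simps)
qed

lemma line_shifts_conj:
  assumes "s \<in> line_shifts" "h \<in> hgroup" "\<alpha> \<noteq> 0" "\<forall>t. h (lpt t) = lpt (\<alpha> * t + \<beta>)"
  shows "\<alpha> * s \<in> line_shifts"
proof -
  obtain k where k: "k \<in> hgroup" "\<forall>t. k (lpt t) = lpt (t + s)"
    using assms(1) unfolding line_shifts_def by blast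
  have "\<forall>t. (h \<circ> k \<circ> inv h) (lpt t) = lpt (t + \<alpha> * s)"
  proof
    fix t
    have "(h \<circ> k \<circ> inv h) (lpt t) = lpt (\<alpha> * ((t - \<beta>) / \<alpha> + s) + \<beta>)"
      using k(2) assms(4) hgroup_inv_affine[OF assms(2-4)] by simp
    also have "\<dots> = lpt (t + \<alpha> * s)"
      using assms(3) by (intro arg_cong[where f = lpt]) (simp add: field_simps)
    finally show "(h \<circ> k \<circ> inv h) (lpt t) = lpt (t + \<alpha> * s)" .
  qed
  moreover have "h \<circ> k \<circ> inv h \<in> hgroup"
    using assms(2) k(1) hgroup_bij_inv by (blast intro: gen_group_comp)
  ultimately show ?thesis unfolding line_shifts_def by blast
qed

lemma line_shifts_uminus: "s \<in> line_shifts \<Longrightarrow> - s \<in> line_shifts"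
proof -
  assume s: "s \<in> line_shifts"
  then obtain h where h: "h \<in> hgroup" "\<forall>t. h (lpt t) = lpt (t + s)"
    unfolding line_shifts_def by blast
  have "\<forall>t. inv h (lpt t) = lpt (t + - s)"
    using hgroup_inv_affine[of h 1 s] h by simp
  then show ?thesis using hgroup_bij_inv[OF h(1)] unfolding line_shifts_def by blast
qed

lemma line_shifts_int_mult: "s \<in> line_shifts \<Longrightarrow> of_int m * s \<in> line_shifts"
proof -
  assume s: "s \<in> line_shifts"
  have nat: "of_nat n * s \<in> line_shifts" for n
    by (induction n) (auto simp: line_shifts_0 algebra_simps intro: line_shifts_add s)
  show ?thesis
  proof (cases "m \<ge> 0")
    case True
    then show ?thesis using nat[of "nat m"] by simp
  next
    case False
    then show ?thesis using line_shifts_uminus[OF nat[of "nat (- m)"]] by simp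
  qed
qed

lemma line_shifts_commutator: "(1 - mu) * (lam - 1) \<in> line_shifts"
proof -
  let ?c = "homothety a lam \<circ> homothety b mu \<circ> homothety a (inverse lam) \<circ> homothety b (inverse mu)"
  have "\<forall>t. ?c (lpt t) = lpt (t + (1 - mu) * (lam - 1))"
    using lam_nz mu_nz
    by (simp add: homothety_first_point homothety_second_point)
      (intro allI arg_cong[where f = lpt], simp add: field_simps)
  moreover have "?c \<in> hgroup"
    using hgroup_inverse_generators by (intro gen_group_comp) (auto intro: gen_group_generator)
  ultimately show ?thesis unfolding line_shifts_def by blast
qed

lemma hgroup_contraction:
  assumes "cmod lam \<noteq> 1 \<or> cmod mu \<noteq> 1"
  obtains h \<alpha> \<beta> where "h \<in> hgroup" "\<alpha> \<noteq> 0" "cmod \<alpha> < 1" "\<forall>t. h (lpt t) = lpt (\<alpha> * t + \<beta>)"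
proof -
  have lt1: "cmod \<nu> < 1 \<or> cmod (inverse \<nu>) < 1" if "\<nu> \<noteq> 0" "cmod \<nu> \<noteq> 1" for \<nu> :: complex
    using that by (auto simp: norm_inverse intro: inverse_less_1_iff[THEN iffD2])
  have f: "homothety a lam \<in> hgroup" and g: "homothety b mu \<in> hgroup"
    by (auto intro: gen_group_generator)
  from assms consider "cmod lam < 1" | "cmod (inverse lam) < 1" | "cmod mu < 1" | "cmod (inverse mu) < 1"
    using lt1 lam_nz mu_nz by blast
  then show ?thesis
  proof cases
    case 1 then show ?thesis using that[OF f, of lam 0] lam_nz by (simp add: homothety_first_point)
  next
    case 2 then show ?thesis using that[OF hgroup_inverse_generators(1), of "inverse lam" 0] lam_nz
      by (simp add: homothety_first_point)
  next
    case 3 then show ?thesis using that[OF g, of mu "1 - mu"] mu_nz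
      by (simp add: homothety_second_point)
  next
    case 4 then show ?thesis
      using that[OF hgroup_inverse_generators(2), of "inverse mu" "1 - inverse mu"] mu_nz by (simp add: homothety_second_point)
  qed
qed

text \<open>A contracting multiplier shrinks the commutator translation: G contains
  non-trivial translations of arbitrarily small length.\<close>
lemma line_shifts_small:
  assumes "lam \<noteq> 1" "mu \<noteq> 1" "cmod lam \<noteq> 1 \<or> cmod mu \<noteq> 1" "\<delta> > 0"
  shows "\<exists>s\<in>line_shifts. s \<noteq> 0 \<and> cmod s < \<delta>"
proof -
  obtain h \<alpha> \<beta> where h: "h \<in> hgroup" "\<alpha> \<noteq> 0" "cmod \<alpha> < 1" "\<forall>t. h (lpt t) = lpt (\<alpha> * t + \<beta>)"
    using hgroup_contraction assms(3) by blast
  define c where "c = (1 - mu) * (lam - 1)"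
  have c: "c \<in> line_shifts" "c \<noteq> 0"
    using line_shifts_commutator assms(1,2) by (auto simp: c_def)
  have powers: "\<alpha> ^ n * c \<in> line_shifts" for n
    by (induction n) (use c h in \<open>auto simp: mult.assoc dest: line_shifts_conj\<close>)
  obtain n where n: "cmod \<alpha> ^ n < \<delta> / cmod c"
    using real_arch_pow_inv[of "\<delta> / cmod c" "cmod \<alpha>"] assms(4) c(2) h(3) by auto
  have "cmod (\<alpha> ^ n * c) < \<delta>"
    using n c(2) by (simp add: norm_mult norm_power pos_less_divide_eq)
  then show ?thesis using powers[of n] h(2) c(2) by (intro bexI[of _ "\<alpha> ^ n * c"]) simp_all
qed

text \<open>If moreover lam or mu is not real, the translation parameters are dense in C:
  they contain the lattices Z s + Z rho s for small s and a non-real multiplier rho.\<close>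
lemma line_shifts_dense:
  assumes "lam \<noteq> 1" "mu \<noteq> 1" "cmod lam \<noteq> 1 \<or> cmod mu \<noteq> 1" "lam \<notin> \<real> \<or> mu \<notin> \<real>" "e > 0"
  shows "\<exists>\<sigma>\<in>line_shifts. cmod (w - \<sigma>) < e"
proof -
  obtain \<rho> k \<gamma> where \<rho>: "Im \<rho> \<noteq> 0" "k \<in> hgroup" "\<forall>t. k (lpt t) = lpt (\<rho> * t + \<gamma>)"
  proof (cases "lam \<in> \<real>")
    case True
    then show ?thesis using that[of mu "homothety b mu" "1 - mu"] assms(4)
      by (auto simp: complex_is_Real_iff homothety_second_point intro: gen_group_generator)
  next
    case False
    then show ?thesis using that[of lam "homothety a lam" 0]
      by (auto simp: complex_is_Real_iff homothety_first_point intro: gen_group_generator)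
  qed
  have "e / (1 + cmod \<rho>) > 0" using assms(5) by (simp add: add_pos_nonneg)
  then obtain s where s: "s \<in> line_shifts" "s \<noteq> 0" "cmod s < e / (1 + cmod \<rho>)"
    using line_shifts_small[OF assms(1-3)] by blast
  have "\<rho> \<noteq> 0" using \<rho>(1) by auto
  then have \<rho>s: "\<rho> * s \<in> line_shifts"
    using line_shifts_conj[OF s(1) \<rho>(2) _ \<rho>(3)] by blast
  obtain i j :: int where ij:
    "cmod (w - (of_int i * s + of_int j * (\<rho> * s))) \<le> cmod s * (1 + cmod \<rho>) / 2"
    using lattice_approx[OF \<rho>(1) s(2)] by blast
  have "of_int i * s + of_int j * (\<rho> * s) \<in> line_shifts"
    by (intro line_shifts_add line_shifts_int_mult s(1) \<rho>s)
  moreover have "cmod s * (1 + cmod \<rho>) / 2 < e"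
    using s(3) assms(5) by (simp add: pos_less_divide_eq add_pos_nonneg)
  ultimately show ?thesis
    using ij by (meson bexI le_less_trans)
qed

subsection \<open>The three cases\<close>

lemma real_case_not_dense:
  assumes "lam \<in> \<real>" "mu \<in> \<real>" "a \<noteq> b"
  shows "lpt \<i> \<notin> closure (orbit hgroup a)"
proof
  assume closure: "lpt \<i> \<in> closure (orbit hgroup a)"
  have "norm (b - a) > 0" using assms(3) by simp
  with closure obtain y where y: "y \<in> orbit hgroup a" "dist y (lpt \<i>) < norm (b - a)"
    unfolding closure_approachable by blast
  then obtain h where h: "h \<in> hgroup" "y = h a" by (auto simp: orbit_iff)
  obtain \<alpha> \<beta> where ab: "\<beta> \<in> \<real>" "\<forall>t. h (lpt t) = lpt (\<alpha> * t + \<beta>)"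
    using hgroup_real[OF assms(1,2) h(1)] by blast
  have "y = lpt \<beta>" using h(2) ab(2) line_point_0[of a b] by (metis add_0 mult_zero_right)
  then have "dist y (lpt \<i>) = cmod (\<beta> - \<i>) * norm (b - a)" by (simp add: dist_line_point)
  moreover have "1 \<le> cmod (\<beta> - \<i>)"
    using abs_Im_le_cmod[of "\<beta> - \<i>"] ab(1) by (simp add: complex_is_Real_iff)
  then have "norm (b - a) \<le> cmod (\<beta> - \<i>) * norm (b - a)"
    using mult_right_mono[of 1 "cmod (\<beta> - \<i>)" "norm (b - a)"] by simp
  ultimately show False using y(2) by simp
qed

lemma isometric_case:
  assumes "cmod lam = 1" "cmod mu = 1" "closure (orbit hgroup a) = cline a b" "z \<in> cline a b"
  shows "cline a b \<subseteq> closure (orbit hgroup z)"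
proof -
  have isometry: "dist (h x) (h y) = dist x y"
    if hG: "h \<in> hgroup" and xy: "x \<in> cline a b" "y \<in> cline a b" for h x y
  proof -
    obtain \<alpha> \<beta> where ab: "cmod \<alpha> = 1" "\<forall>t. h (lpt t) = lpt (\<alpha> * t + \<beta>)"
      using hgroup_isometric[OF assms(1,2) hG] by blast
    obtain u v where "x = lpt u" "y = lpt v" using xy by (auto simp: cline_eq_range)
    then show ?thesis using ab
      by (simp add: dist_line_point norm_mult right_diff_distrib[symmetric])
  qed
  have near: "\<exists>h\<in>hgroup. dist (h a) y < e" if y: "y \<in> cline a b" and e: "e > 0" for y e
  proof -
    have "y \<in> closure (orbit hgroup a)" using y assms(3) by simp
    then obtain x where "x \<in> orbit hgroup a" "dist x y < e"
      using e unfolding closure_approachable by blast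
    then show ?thesis by (auto simp: orbit_iff)
  qed
  have a_line: "a \<in> cline a b" using line_point_0[of a b] by (metis cline_eq_range rangeI)
  show ?thesis
  proof
    fix y assume y: "y \<in> cline a b"
    show "y \<in> closure (orbit hgroup z)"
      unfolding closure_approachable
    proof (intro allI impI)
      fix e :: real assume e: "e > 0"
      obtain h where h: "h \<in> hgroup" "dist (h a) z < e/2"
        using near[OF assms(4) half_gt_zero[OF e]] by blast
      obtain h' where h': "h' \<in> hgroup" "dist (h' a) y < e/2"
        using near[OF y half_gt_zero[OF e]] by blast
      have inv_h: "inv h \<in> hgroup" "inv h (h a) = a"
        using hgroup_bij_inv[OF h(1)] by (auto simp: bij_is_inj)
      have kz: "inv h z \<in> cline a b" using hgroup_maps_line[OF inv_h(1) assms(4)] .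
      have "dist (h' (inv h z)) (h' a) = dist z (h a)"
        using isometry[OF h'(1) kz a_line]
          isometry[OF inv_h(1) assms(4) hgroup_maps_line[OF h(1) a_line]]
        by (simp add: inv_h(2))
      then have "dist (h' (inv h z)) y < e"
        using dist_triangle[of "h' (inv h z)" y "h' a"] h(2) h'(2) by (simp add: dist_commute)
      moreover have "h' (inv h z) \<in> orbit hgroup z"
        using gen_group_comp[OF h'(1) inv_h(1)] unfolding orbit_iff by (metis comp_apply)
      ultimately show "\<exists>x\<in>orbit hgroup z. dist x y < e" by blast
    qed
  qed
qed

lemma translation_case:
  assumes "lam \<noteq> 1" "mu \<noteq> 1" "cmod lam \<noteq> 1 \<or> cmod mu \<noteq> 1" "lam \<notin> \<real> \<or> mu \<notin> \<real>"
    and "z \<in> cline a b"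
  shows "cline a b \<subseteq> closure (orbit hgroup z)"
proof
  fix y assume "y \<in> cline a b"
  then obtain w where y: "y = lpt w" by (auto simp: cline_eq_range)
  obtain t0 where z: "z = lpt t0" using assms(5) by (auto simp: cline_eq_range)
  show "y \<in> closure (orbit hgroup z)"
    unfolding closure_approachable
  proof (intro allI impI)
    fix e :: real assume e: "e > 0"
    have nba: "norm (b - a) + 1 > 0" by (simp add: add_nonneg_pos)
    obtain \<sigma> where \<sigma>: "\<sigma> \<in> line_shifts" "cmod ((w - t0) - \<sigma>) < e / (norm (b - a) + 1)"
      using line_shifts_dense[OF assms(1-4)] e nba by (meson divide_pos_pos)
    then obtain h where h: "h \<in> hgroup" "\<forall>t. h (lpt t) = lpt (t + \<sigma>)"
      unfolding line_shifts_def by blast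
    have "dist (h z) y = cmod ((w - t0) - \<sigma>) * norm (b - a)"
      using h(2) by (simp add: z y dist_line_point norm_minus_commute algebra_simps)
    also have "\<dots> \<le> cmod ((w - t0) - \<sigma>) * (norm (b - a) + 1)"
      by (intro mult_left_mono) auto
    also have "\<dots> < e" using \<sigma>(2) nba by (simp add: pos_less_divide_eq)
    finally have "dist (h z) y < e" .
    then show "\<exists>x\<in>orbit hgroup z. dist x y < e"
      using h(1) by (intro bexI[of _ "h z"]) (auto simp: orbit_iff)
  qed
qed

end

theorem lemma3p8:
  fixes a b :: "complex ^ 'n" and lam \<mu> :: complex
  assumes "lam \<notin> {0, 1}" and "\<mu> \<notin> {0, 1}" and "a \<noteq> b"
    and "closure (orbit (gen_group {homothety a lam, homothety b \<mu>}) a) = cline a b"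
  shows "\<forall>z \<in> cline a b. closure (orbit (gen_group {homothety a lam, homothety b \<mu>}) z) = cline a b"
proof
  fix z assume z: "z \<in> cline a b"
  have nz: "lam \<noteq> 0" "\<mu> \<noteq> 0" using assms(1,2) by auto
  have "closed (cline a b)" by (metis assms(4) closed_closure)
  then have upper: "closure (orbit (gen_group {homothety a lam, homothety b \<mu>}) z) \<subseteq> cline a b"
    using orbit_subset_line[OF nz z] by (simp add: closure_minimal)
  have not_real: "lam \<notin> \<real> \<or> \<mu> \<notin> \<real>"
    using real_case_not_dense[OF nz _ _ assms(3)] assms(4) by (auto simp: cline_eq_range)
  have "cline a b \<subseteq> closure (orbit (gen_group {homothety a lam, homothety b \<mu>}) z)"
  proof (cases "cmod lam = 1 \<and> cmod \<mu> = 1")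
    case True
    then show ?thesis using isometric_case[OF nz _ _ assms(4) z] by blast
  next
    case False
    then show ?thesis using translation_case[OF nz _ _ _ not_real z] assms(1,2) by blast
  qed
  with upper show "closure (orbit (gen_group {homothety a lam, homothety b \<mu>}) z) = cline a b"
    by blast
qed

end
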